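(* Let $G$ be a finite group and $H$ a core-free subgroup of $G$ contained in a normal subgroup $N$ of $G$ such that $[N:H]=2$. Then $N$ is an elementary abelian $2$-group.
   Context: A subgroup $H$ of $G$ is core-free if it contains no nontrivial normal subgroup of $G$. *)

theory Defs
  imports "HOL-Algebra.Algebra"
begin

definition core_free :: "('a, 'b) monoid_scheme \<Rightarrow> 'a set \<Rightarrow> bool" where
  "core_free G H \<longleftrightarrow> (\<forall>K. K \<lhd> G \<and> K \<subseteq> H \<longrightarrow> K = {\<one>\<^bsub>G\<^esub>})"

definition elementary_abelian_2_group :: "('a, 'b) monoid_scheme \<Rightarrow> 'a set \<Rightarrow> bool" where
  "elementary_abelian_2_group G N \<longleftrightarrow>
     (\<forall>x\<in>N. \<forall>y\<in>N. x \<otimes>\<^bsub>G\<^esub> y = y \<otimes>\<^bsub>G\<^esub> x) \<and> (\<forall>x\<in>N. x \<otimes>\<^bsub>G\<^esub> x = \<one>\<^bsub>G\<^esub>)"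

end

theory Submission
  imports Defs
begin

text \<open>
  If \<open>H\<close> has index at most 2 in \<open>N\<close>, then of the three cosets \<open>H\<close>, \<open>H y\<close>, \<open>H y\<^sup>2\<close> two coincide,
  which forces \<open>y\<^sup>2 \<in> H\<close> for every \<open>y \<in> N\<close>. Normality of \<open>N\<close> moves every conjugate of \<open>y\<close> into
  \<open>N\<close>, so all conjugates of \<open>y\<^sup>2\<close> lie in \<open>H\<close>: the square lies in the core of \<open>H\<close>, which is
  trivial. Hence \<open>N\<close> has exponent 2, and a group of exponent 2 is abelian.
\<close>

lemma rcosets_subgroup_eq_image:
  fixes G (structure)
  shows "rcosets\<^bsub>G\<lparr>carrier := N\<rparr>\<^esub> H = (\<lambda>a. H #> a) ` N"
  unfolding RCOSETS_def r_coset_def by auto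

lemma (in group) square_mem_of_index_le_two:
  assumes "subgroup H G" "subgroup N G"
    and fin: "finite (rcosets\<^bsub>G\<lparr>carrier := N\<rparr>\<^esub> H)"
    and index: "card (rcosets\<^bsub>G\<lparr>carrier := N\<rparr>\<^esub> H) \<le> 2"
    and y: "y \<in> N"
  shows "y \<otimes> y \<in> H"
proof (rule ccontr)
  assume yy: "y \<otimes> y \<notin> H"
  have yG: "y \<in> carrier G" using subgroup.mem_carrier[OF assms(2) y] .
  have HG: "H \<subseteq> carrier G" using subgroup.subset[OF assms(1)] .
  have "y \<notin> H" using yy subgroup.m_closed[OF assms(1)] by blast
  then have Hy: "H #> y \<noteq> H" using coset_join1[OF _ yG assms(1)] by blast
  have Hyy: "H #> (y \<otimes> y) \<noteq> H" using yy coset_join1[OF _ _ assms(1)] yG by blast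
  have "H #> (y \<otimes> y) \<noteq> H #> y"
  proof
    assume "H #> (y \<otimes> y) = H #> y"
    then have "H #> (y \<otimes> y \<otimes> inv y) = H" using coset_mult_inv2 yG HG by simp
    then show False using Hy yG by (simp add: m_assoc)
  qed
  then have "card {H, H #> y, H #> (y \<otimes> y)} = 3" using Hy Hyy by simp
  moreover have "{H, H #> y, H #> (y \<otimes> y)} \<subseteq> rcosets\<^bsub>G\<lparr>carrier := N\<rparr>\<^esub> H"
  proof -
    have "H #> \<one> \<in> (\<lambda>a. H #> a) ` N" "H #> y \<in> (\<lambda>a. H #> a) ` N"
      "H #> (y \<otimes> y) \<in> (\<lambda>a. H #> a) ` N"
      using subgroup.one_closed[OF assms(2)] subgroup.m_closed[OF assms(2) y y] y by blast+
    then show ?thesis unfolding rcosets_subgroup_eq_image using coset_mult_one[OF HG] by simp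
  qed
  ultimately have "3 \<le> card (rcosets\<^bsub>G\<lparr>carrier := N\<rparr>\<^esub> H)" using card_mono[OF fin] by metis
  then show False using index by simp
qed

definition core :: "('a, 'b) monoid_scheme \<Rightarrow> 'a set \<Rightarrow> 'a set" where
  "core G H = {z \<in> carrier G. \<forall>g \<in> carrier G. inv\<^bsub>G\<^esub> g \<otimes>\<^bsub>G\<^esub> z \<otimes>\<^bsub>G\<^esub> g \<in> H}"

lemma (in group) core_subset: "core G H \<subseteq> H"
proof
  fix z assume "z \<in> core G H"
  then have "inv \<one> \<otimes> z \<otimes> \<one> \<in> H" "z \<in> carrier G" unfolding core_def by auto
  then show "z \<in> H" by simp
qed

lemma (in group) conj_mult:
  assumes "g \<in> carrier G" "a \<in> carrier G" "b \<in> carrier G"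
  shows "inv g \<otimes> (a \<otimes> b) \<otimes> g = (inv g \<otimes> a \<otimes> g) \<otimes> (inv g \<otimes> b \<otimes> g)"
proof -
  have "g \<otimes> (inv g \<otimes> (b \<otimes> g)) = b \<otimes> g" using assms by (simp add: m_assoc[symmetric])
  then show ?thesis using assms by (simp add: m_assoc)
qed

lemma (in group) conj_inv:
  assumes "g \<in> carrier G" "a \<in> carrier G"
  shows "inv g \<otimes> inv a \<otimes> g = inv (inv g \<otimes> a \<otimes> g)"
  using assms by (simp add: inv_mult_group m_assoc)

lemma (in group) conj_conj:
  assumes "x \<in> carrier G" "g \<in> carrier G" "z \<in> carrier G"
  shows "inv (inv x \<otimes> g) \<otimes> z \<otimes> (inv x \<otimes> g) = inv g \<otimes> (x \<otimes> z \<otimes> inv x) \<otimes> g"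
  using assms by (simp add: inv_mult_group m_assoc)

lemma (in group) subgroup_core:
  assumes "subgroup H G"
  shows "subgroup (core G H) G"
proof (rule subgroupI)
  show "core G H \<subseteq> carrier G" unfolding core_def by auto
  show "core G H \<noteq> {}"
    using subgroup.one_closed[OF assms] unfolding core_def by (auto simp: m_assoc)
next
  fix a assume "a \<in> core G H"
  then show "inv a \<in> core G H"
    using conj_inv subgroup.m_inv_closed[OF assms] unfolding core_def by auto
next
  fix a b assume "a \<in> core G H" "b \<in> core G H"
  then show "a \<otimes> b \<in> core G H"
    using conj_mult subgroup.m_closed[OF assms] unfolding core_def by auto
qed

lemma (in group) normal_core:
  assumes "subgroup H G"
  shows "core G H \<lhd> G"
  unfolding normal_inv_iff
proof (intro conjI ballI subgroup_core[OF assms])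
  fix x z assume x: "x \<in> carrier G" and z: "z \<in> core G H"
  then have "inv (inv x \<otimes> g) \<otimes> z \<otimes> (inv x \<otimes> g) \<in> H" if "g \<in> carrier G" for g
    using that unfolding core_def by auto
  then show "x \<otimes> z \<otimes> inv x \<in> core G H"
    using x z conj_conj unfolding core_def by auto
qed

lemma (in group) core_eq_one_if_core_free:
  assumes "subgroup H G" "core_free G H"
  shows "core G H = {\<one>}"
  using assms normal_core core_subset unfolding core_free_def by blast

lemma (in group) square_mem_core:
  assumes "N \<lhd> G" and squares: "\<And>y. y \<in> N \<Longrightarrow> y \<otimes> y \<in> H" and x: "x \<in> N"
  shows "x \<otimes> x \<in> core G H"
proof -
  have xG: "x \<in> carrier G" using subgroup.mem_carrier[OF normal_imp_subgroup[OF assms(1)] x] .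
  have "inv g \<otimes> (x \<otimes> x) \<otimes> g \<in> H" if g: "g \<in> carrier G" for g
    using squares[OF normal.inv_op_closed1[OF assms(1) g x]] conj_mult[OF g xG xG] by simp
  then show ?thesis using xG unfolding core_def by auto
qed

lemma (in group) elementary_abelian_2_groupI:
  assumes "subgroup N G" and squares: "\<And>x. x \<in> N \<Longrightarrow> x \<otimes> x = \<one>"
  shows "elementary_abelian_2_group G N"
  unfolding elementary_abelian_2_group_def
proof (intro conjI ballI squares)
  fix x y assume x: "x \<in> N" and y: "y \<in> N"
  have self_inv: "inv z = z" if "z \<in> N" for z
    using squares[OF that] subgroup.mem_carrier[OF assms(1) that] inv_equality by blast
  have xG: "x \<in> carrier G" and yG: "y \<in> carrier G"
    using x y subgroup.mem_carrier[OF assms(1)] by auto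
  have "x \<otimes> y = inv (x \<otimes> y)" using self_inv subgroup.m_closed[OF assms(1) x y] by simp
  also have "\<dots> = y \<otimes> x" using inv_mult_group[OF xG yG] self_inv x y by simp
  finally show "x \<otimes> y = y \<otimes> x" .
qed

theorem mainTheorem5:
  fixes G (structure)
  assumes "group G" and "finite (carrier G)"
    and "subgroup H G" and "core_free G H"
    and "N \<lhd> G" and "H \<subseteq> N"
    and "card (rcosets\<^bsub>G\<lparr>carrier := N\<rparr>\<^esub> H) = 2"
  shows "elementary_abelian_2_group G N"
proof -
  interpret group G by fact
  have N: "subgroup N G" using assms(5) by (rule normal_imp_subgroup)
  have fin: "finite (rcosets\<^bsub>G\<lparr>carrier := N\<rparr>\<^esub> H)"
    using assms(7) by (intro card_ge_0_finite) simp
  have squares_in_H: "y \<otimes> y \<in> H" if "y \<in> N" for y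
    using square_mem_of_index_le_two[OF assms(3) N fin _ that] assms(7) by simp
  have "x \<otimes> x = \<one>" if "x \<in> N" for x
    using square_mem_core[OF assms(5) squares_in_H that]
      core_eq_one_if_core_free[OF assms(3,4)] by simp
  then show ?thesis using elementary_abelian_2_groupI[OF N] by blast
qed

end
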